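(* Let $U$ be the distillation gadget on a complete $B$-ary tree of depth $D$. For every qubit (node) $i$ of the tree, $|\mathrm{supp}(U(Z_i\otimes\mathbb I)U^\dagger)|\le D$; that is, the locality of the parent Hamiltonian of the distillation circuit is at most $D$.
   Context: Layers of the tree are $L_1$ (leaves), $L_2,\dots,L_D$ (root); $N_u$ denotes the children of node $u$; each node is a qubit. The distillation gadget $U$: for $i=2,3,\dots,D$ in this order, for each parent $u\in L_i$ and each child $c\in N_u$, apply $\mathsf{CNOT}$ with control $u$ and target $c$. The parent Hamiltonian of $U$ is $\sum_iUZ_iU^\dagger$. *)

theory Defs
  imports Complex_Main
begin

(* The root is [], the children of u are u @ [j] (j < B).
   A node of length k lies in layer L_(D-k); leaves (length D-1) form L_1, the root forms L_D. *)
definition tree_nodes :: "nat \<Rightarrow> nat \<Rightarrow> nat list set" where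
  "tree_nodes B D = {xs. length xs < D \<and> set xs \<subseteq> {..<B}}"

definition layer :: "nat \<Rightarrow> nat \<Rightarrow> nat \<Rightarrow> nat list list" where
  "layer B D i = List.n_lists (D - i) [0..<B]"

definition children :: "nat \<Rightarrow> nat list \<Rightarrow> nat list list" where
  "children B u = map (\<lambda>j. u @ [j]) [0..<B]"

(* computational basis states of the qubits V: bit assignments vanishing outside V *)
definition states :: "'q set \<Rightarrow> ('q \<Rightarrow> bool) set" where
  "states V = {x. \<forall>v. v \<notin> V \<longrightarrow> \<not> x v}"

(* operators on the qubits V, given by their matrix entries <x|A|y> in the computational basis *)
type_synonym 'q op = "('q \<Rightarrow> bool) \<Rightarrow> ('q \<Rightarrow> bool) \<Rightarrow> complex"

definition op_mult :: "'q set \<Rightarrow> 'q op \<Rightarrow> 'q op \<Rightarrow> 'q op" where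
  "op_mult V A C = (\<lambda>x y. \<Sum>z\<in>states V. A x z * C z y)"

definition op_id :: "'q op" where
  "op_id = (\<lambda>x y. if x = y then 1 else 0)"

definition op_adj :: "'q op \<Rightarrow> 'q op" where
  "op_adj A = (\<lambda>x y. cnj (A y x))"

definition pauliZ :: "'q \<Rightarrow> 'q op" where
  "pauliZ i = (\<lambda>x y. if x = y then (if x i then -1 else 1) else 0)"

definition cnot :: "'q \<Rightarrow> 'q \<Rightarrow> 'q op" where
  "cnot u c = (\<lambda>x y. if x = y(c := (y c \<noteq> y u)) then 1 else 0)"

(* circuit of gates listed in time order: U = g_k \<cdots> g_1 *)
definition circuit :: "'q set \<Rightarrow> 'q op list \<Rightarrow> 'q op" where
  "circuit V gs = foldl (\<lambda>acc g. op_mult V g acc) op_id gs"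

definition distill_gates :: "nat \<Rightarrow> nat \<Rightarrow> nat list op list" where
  "distill_gates B D =
     concat (map (\<lambda>i. concat (map (\<lambda>u. map (\<lambda>c. cnot u c) (children B u)) (layer B D i))) [2..<D+1])"

definition distill_U :: "nat \<Rightarrow> nat \<Rightarrow> nat list op" where
  "distill_U B D = circuit (tree_nodes B D) (distill_gates B D)"

(* A acts as the identity on qubit i, i.e. A = A' \<otimes> I_i *)
definition acts_trivially_on :: "'q set \<Rightarrow> 'q op \<Rightarrow> 'q \<Rightarrow> bool" where
  "acts_trivially_on V A i \<longleftrightarrow>
     (\<forall>x\<in>states V. \<forall>y\<in>states V.
        (x i \<noteq> y i \<longrightarrow> A x y = 0) \<and> A (x(i := \<not> x i)) (y(i := \<not> y i)) = A x y)"

definition supp :: "'q set \<Rightarrow> 'q op \<Rightarrow> 'q set" where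
  "supp V A = {i \<in> V. \<not> acts_trivially_on V A i}"

end

theory Submission
  imports Defs "HOL-Library.Sublist"
begin

text \<open>
  The gadget consists of CNOTs only, so on computational basis states it is the permutation
  operator of a reversible classical map \<open>F\<close>. Conjugating the diagonal operator \<open>Z\<^sub>i\<close> by it
  gives the diagonal operator with entries \<open>(-1)^(F\<^sup>-\<^sup>1 x)\<^sub>i\<close>. Undoing a CNOT changes only
  the target bit, and each gate's control is the parent of its target, so bit \<open>i\<close> of
  \<open>F\<^sup>-\<^sup>1 x\<close> depends only on the bits of \<open>x\<close> at the ancestors of \<open>i\<close> (including \<open>i\<close>).
  Hence the support lies on the path from the root to \<open>i\<close>, which has at most \<open>D\<close> nodes.
\<close>

definition perm_op :: "(('q \<Rightarrow> bool) \<Rightarrow> 'q \<Rightarrow> bool) \<Rightarrow> 'q op" where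
  "perm_op f = (\<lambda>x y. if x = f y then 1 else 0)"

definition diag_op :: "(('q \<Rightarrow> bool) \<Rightarrow> complex) \<Rightarrow> 'q op" where
  "diag_op d = (\<lambda>x y. if x = y then d x else 0)"

definition cnot_flip :: "'q \<Rightarrow> 'q \<Rightarrow> ('q \<Rightarrow> bool) \<Rightarrow> ('q \<Rightarrow> bool)" where
  "cnot_flip u c y = y(c := (y c \<noteq> y u))"

lemma cnot_eq_perm_op: "cnot u c = perm_op (cnot_flip u c)"
  unfolding cnot_def perm_op_def cnot_flip_def by simp

lemma pauliZ_eq_diag_op: "pauliZ i = diag_op (\<lambda>x. if x i then -1 else 1)"
  unfolding pauliZ_def diag_op_def by (simp add: fun_eq_iff)

lemma cnot_flip_involution: "u \<noteq> c \<Longrightarrow> cnot_flip u c (cnot_flip u c y) = y"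
  unfolding cnot_flip_def by (auto simp: fun_eq_iff)

lemma cnot_flip_states: "c \<in> V \<Longrightarrow> y \<in> states V \<Longrightarrow> cnot_flip u c y \<in> states V"
  unfolding cnot_flip_def states_def by auto

lemma finite_states: "finite V \<Longrightarrow> finite (states V)"
proof -
  assume "finite V"
  have "states V \<subseteq> (\<lambda>A v. v \<in> A) ` Pow V"
  proof
    fix x assume "x \<in> states V"
    then have "x = (\<lambda>v. v \<in> {v. x v})" "{v. x v} \<in> Pow V"
      unfolding states_def by auto
    then show "x \<in> (\<lambda>A v. v \<in> A) ` Pow V" by blast
  qed
  then show ?thesis using \<open>finite V\<close> finite_subset by blast
qed

text \<open>Gates are (control, target) pairs; the head of the list is applied first.\<close>

fun cnot_seq :: "('q \<times> 'q) list \<Rightarrow> ('q \<Rightarrow> bool) \<Rightarrow> ('q \<Rightarrow> bool)" where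
  "cnot_seq [] = id"
| "cnot_seq ((u, c) # P) = cnot_seq P \<circ> cnot_flip u c"

fun cnot_seq_inv :: "('q \<times> 'q) list \<Rightarrow> ('q \<Rightarrow> bool) \<Rightarrow> ('q \<Rightarrow> bool)" where
  "cnot_seq_inv [] = id"
| "cnot_seq_inv ((u, c) # P) = cnot_flip u c \<circ> cnot_seq_inv P"

lemma cnot_seq_inverse:
  assumes "\<forall>(u, c) \<in> set P. u \<noteq> c"
  shows "cnot_seq P (cnot_seq_inv P x) = x" "cnot_seq_inv P (cnot_seq P x) = x"
  using assms by (induction P arbitrary: x) (auto simp: cnot_flip_involution)

lemma cnot_seq_inv_states:
  "\<forall>(u, c) \<in> set P. c \<in> V \<Longrightarrow> y \<in> states V \<Longrightarrow> cnot_seq_inv P y \<in> states V"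
  by (induction P arbitrary: y) (auto simp: cnot_flip_states)

lemma cnot_seq_inv_local:
  assumes "\<forall>(u, c) \<in> set P. c \<in> Q \<longrightarrow> u \<in> Q"
    and "\<forall>q \<in> Q. x q = x' q"
  shows "\<forall>q \<in> Q. cnot_seq_inv P x q = cnot_seq_inv P x' q"
  using assms
proof (induction P)
  case Nil
  then show ?case by simp
next
  case (Cons g P)
  obtain u c where g: "g = (u, c)" by (cases g)
  have "\<forall>q \<in> Q. cnot_seq_inv P x q = cnot_seq_inv P x' q"
    using Cons by auto
  then show ?case using Cons.prems g by (auto simp: cnot_flip_def)
qed

lemma op_mult_perm_op:
  assumes "finite V" "y \<in> states V" "f y \<in> states V"
    and A: "\<forall>z \<in> states V. A z y = perm_op f z y"
  shows "op_mult V (perm_op g) A x y = perm_op (g \<circ> f) x y"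
proof -
  have "op_mult V (perm_op g) A x y = (\<Sum>z\<in>states V. if z = f y then perm_op g x z else 0)"
    unfolding op_mult_def using A by (intro sum.cong) (auto simp: perm_op_def)
  also have "\<dots> = perm_op g x (f y)"
    using assms(3) finite_states[OF assms(1)] by simp
  finally show ?thesis by (simp add: perm_op_def)
qed

lemma foldl_cnots_perm_op:
  assumes "finite V" "\<forall>(u, c) \<in> set P. c \<in> V"
    and "\<forall>x \<in> states V. \<forall>y \<in> states V. A x y = perm_op f x y"
    and "\<forall>y \<in> states V. f y \<in> states V"
  shows "\<forall>x \<in> states V. \<forall>y \<in> states V.
           foldl (\<lambda>acc g. op_mult V g acc) A (map (\<lambda>(u, c). cnot u c) P) x y
           = perm_op (cnot_seq P \<circ> f) x y"
  using assms(2-)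
proof (induction P arbitrary: A f)
  case Nil
  then show ?case by simp
next
  case (Cons g P)
  obtain u c where g: "g = (u, c)" by (cases g)
  have c: "c \<in> V" using Cons.prems g by auto
  have "\<forall>x \<in> states V. \<forall>y \<in> states V.
          op_mult V (cnot u c) A x y = perm_op (cnot_flip u c \<circ> f) x y"
    unfolding cnot_eq_perm_op using op_mult_perm_op[OF assms(1)] Cons.prems by blast
  moreover have "\<forall>y \<in> states V. (cnot_flip u c \<circ> f) y \<in> states V"
    using Cons.prems(3) c by (simp add: cnot_flip_states)
  moreover have "\<forall>(u, c) \<in> set P. c \<in> V" using Cons.prems(1) by simp
  ultimately have "\<forall>x \<in> states V. \<forall>y \<in> states V.
      foldl (\<lambda>acc g. op_mult V g acc) (op_mult V (cnot u c) A) (map (\<lambda>(u, c). cnot u c) P) x y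
      = perm_op (cnot_seq P \<circ> (cnot_flip u c \<circ> f)) x y"
    using Cons.IH by blast
  then show ?case using g by (simp add: comp_def)
qed

lemma circuit_cnots_perm_op:
  assumes "finite V" "\<forall>(u, c) \<in> set P. c \<in> V" "x \<in> states V" "y \<in> states V"
  shows "circuit V (map (\<lambda>(u, c). cnot u c) P) x y = perm_op (cnot_seq P) x y"
proof -
  have "\<forall>x \<in> states V. \<forall>y \<in> states V. op_id x y = perm_op id x y"
    by (simp add: op_id_def perm_op_def)
  from foldl_cnots_perm_op[OF assms(1,2) this] assms(3,4) show ?thesis
    unfolding circuit_def by simp
qed

lemma perm_op_conj_diag_op:
  assumes "finite V"
    and U: "\<forall>x \<in> states V. \<forall>y \<in> states V. U x y = perm_op f x y"
    and inverse: "\<And>x. f (g x) = x" "\<And>x. g (f x) = x"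
    and g_states: "\<And>x. x \<in> states V \<Longrightarrow> g x \<in> states V"
    and x: "x \<in> states V" and y: "y \<in> states V"
  shows "op_mult V (op_mult V U (diag_op d)) (op_adj U) x y = diag_op (d \<circ> g) x y"
proof -
  have U_inv: "U z w = (if w = g z then 1 else 0)" if "z \<in> states V" "w \<in> states V" for z w
    using U that inverse unfolding perm_op_def by metis
  have g_inj: "a = b" if "g a = g b" for a b
    using that inverse(1) by metis
  have UD: "op_mult V U (diag_op d) x w = U x w * d w" if "w \<in> states V" for w
  proof -
    have "op_mult V U (diag_op d) x w = (\<Sum>z\<in>states V. if z = w then U x w * d w else 0)"
      unfolding op_mult_def diag_op_def by (intro sum.cong) auto
    then show ?thesis using that finite_states[OF assms(1)] by simp
  qed
  have "op_mult V (op_mult V U (diag_op d)) (op_adj U) x y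
        = (\<Sum>w\<in>states V. if w = g x then (if x = y then d w else 0) else 0)"
    unfolding op_mult_def[of V "op_mult V U (diag_op d)"] op_adj_def
    using UD U_inv x y g_inj by (intro sum.cong) auto
  also have "\<dots> = diag_op (d \<circ> g) x y"
    using finite_states[OF assms(1)] g_states x by (simp add: diag_op_def)
  finally show ?thesis .
qed

lemma supp_diag_op_subset:
  assumes M: "\<And>x y. x \<in> states V \<Longrightarrow> y \<in> states V \<Longrightarrow> M x y = diag_op d x y"
    and d_local: "\<And>x x'. \<forall>q \<in> Q. x q = x' q \<Longrightarrow> d x = d x'"
  shows "supp V M \<subseteq> Q"
proof
  fix j assume "j \<in> supp V M"
  then have j: "j \<in> V" "\<not> acts_trivially_on V M j" unfolding supp_def by auto
  show "j \<in> Q"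
  proof (rule ccontr)
    assume "j \<notin> Q"
    have "acts_trivially_on V M j"
      unfolding acts_trivially_on_def
    proof (intro ballI conjI impI)
      fix x y assume x: "x \<in> states V" and y: "y \<in> states V"
      show "x j \<noteq> y j \<Longrightarrow> M x y = 0" using M x y by (auto simp: diag_op_def)
      have "x(j := \<not> x j) \<in> states V" "y(j := \<not> y j) \<in> states V"
        using x y j unfolding states_def by auto
      moreover have "d (x(j := \<not> x j)) = d x"
        using d_local \<open>j \<notin> Q\<close> by (metis fun_upd_other)
      moreover have "x(j := \<not> x j) = y(j := \<not> y j) \<longleftrightarrow> x = y"
        by (auto simp: fun_eq_iff)
      ultimately show "M (x(j := \<not> x j)) (y(j := \<not> y j)) = M x y"
        using M x y by (cases "x = y") (simp_all add: diag_op_def)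
    qed
    then show False using j by simp
  qed
qed

definition distill_pairs :: "nat \<Rightarrow> nat \<Rightarrow> (nat list \<times> nat list) list" where
  "distill_pairs B D =
     concat (map (\<lambda>i. concat (map (\<lambda>u. map (\<lambda>c. (u, c)) (children B u)) (layer B D i))) [2..<D+1])"

lemma distill_gates_eq: "distill_gates B D = map (\<lambda>(u, c). cnot u c) (distill_pairs B D)"
  unfolding distill_gates_def distill_pairs_def by (simp add: map_concat o_def)

lemma distill_pairs_child:
  "(u, c) \<in> set (distill_pairs B D) \<Longrightarrow> (\<exists>j. c = u @ [j]) \<and> c \<in> tree_nodes B D"
  unfolding distill_pairs_def layer_def children_def tree_nodes_def
  by (auto simp: set_n_lists)

lemma distill_pairs_control_neq_target: "\<forall>(u, c) \<in> set (distill_pairs B D). u \<noteq> c"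
  using distill_pairs_child by fastforce

lemma distill_pairs_prefix_closed:
  "\<forall>(u, c) \<in> set (distill_pairs B D). c \<in> {v. prefix v i} \<longrightarrow> u \<in> {v. prefix v i}"
  unfolding mem_Collect_eq
proof clarify
  fix u c assume "(u, c) \<in> set (distill_pairs B D)" "prefix c i"
  then obtain j where "prefix (u @ [j]) i" using distill_pairs_child by blast
  then show "prefix u i" by (auto dest: prefix_snocD)
qed

lemma finite_tree_nodes: "finite (tree_nodes B D)"
proof -
  have "tree_nodes B D \<subseteq> {xs. set xs \<subseteq> {..<B} \<and> length xs \<le> D}"
    unfolding tree_nodes_def by auto
  moreover have "finite {xs. set xs \<subseteq> {..<B} \<and> length xs \<le> D}"
    by (rule finite_lists_length_le) simp
  ultimately show ?thesis by (rule finite_subset)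
qed

lemma distill_U_eq_perm_op:
  assumes "x \<in> states (tree_nodes B D)" "y \<in> states (tree_nodes B D)"
  shows "distill_U B D x y = perm_op (cnot_seq (distill_pairs B D)) x y"
  unfolding distill_U_def distill_gates_eq
  using circuit_cnots_perm_op[OF finite_tree_nodes _ assms] distill_pairs_child by blast

theorem claim8p4:
  fixes B D :: nat and i :: "nat list"
  assumes "i \<in> tree_nodes B D"
  shows "card (supp (tree_nodes B D)
           (op_mult (tree_nodes B D)
              (op_mult (tree_nodes B D) (distill_U B D) (pauliZ i))
              (op_adj (distill_U B D)))) \<le> D"
proof -
  let ?V = "tree_nodes B D" and ?P = "distill_pairs B D"
  let ?M = "op_mult ?V (op_mult ?V (distill_U B D) (pauliZ i)) (op_adj (distill_U B D))"
  define d :: "(nat list \<Rightarrow> bool) \<Rightarrow> complex" where "d = (\<lambda>x. if x i then -1 else 1)"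
  have targets: "\<forall>(u, c) \<in> set ?P. c \<in> ?V"
    using distill_pairs_child by blast
  have U: "\<forall>x \<in> states ?V. \<forall>y \<in> states ?V. distill_U B D x y = perm_op (cnot_seq ?P) x y"
    using distill_U_eq_perm_op by blast
  have "?M x y = diag_op (d \<circ> cnot_seq_inv ?P) x y" if "x \<in> states ?V" "y \<in> states ?V" for x y
    unfolding pauliZ_eq_diag_op d_def
    by (rule perm_op_conj_diag_op[OF finite_tree_nodes U
          cnot_seq_inverse[OF distill_pairs_control_neq_target]
          cnot_seq_inv_states[OF targets] that])
  moreover have "(d \<circ> cnot_seq_inv ?P) x = (d \<circ> cnot_seq_inv ?P) x'"
    if "\<forall>q \<in> {v. prefix v i}. x q = x' q" for x x'
    using cnot_seq_inv_local[OF distill_pairs_prefix_closed that] unfolding d_def by simp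
  ultimately have "supp ?V ?M \<subseteq> set (prefixes i)"
    unfolding set_prefixes_eq by (rule supp_diag_op_subset)
  then have "card (supp ?V ?M) \<le> Suc (length i)"
    by (metis List.finite_set card_mono card_set_prefixes)
  also have "\<dots> \<le> D"
    using assms unfolding tree_nodes_def by simp
  finally show ?thesis .
qed

end
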